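(* Let $\mathcal{T}$ be a fully sparse tournament. Then the maximum number of pairwise arc-disjoint directed cycles of $\mathcal{T}$ equals the maximum number of pairwise arc-disjoint triangles of $\mathcal{T}$.
   Context: A tournament is an orientation of a complete graph; a triangle is a directed cycle of length 3. Given a linear ordering $\sigma$ of the vertices of $\mathcal{T}$, an arc $uv$ is backward if $v$ comes before $u$ in $\sigma$. $\mathcal{T}$ is fully sparse (with respect to an ordering $\sigma$) if: the backward arcs of $\sigma$ are pairwise vertex-disjoint (form a matching), no backward arc joins two vertices that are consecutive in $\sigma$, and every vertex of $\mathcal{T}$ is the head or the tail of some backward arc. *)

theory Defs
  imports Main
begin

definition tournament :: "'a set \<Rightarrow> ('a \<times> 'a) set \<Rightarrow> bool" where
  "tournament V A \<longleftrightarrow> finite V \<and> A \<subseteq> V \<times> V \<and> (\<forall>v. (v, v) \<notin> A) \<and>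
     (\<forall>u\<in>V. \<forall>v\<in>V. u \<noteq> v \<longrightarrow> ((u, v) \<in> A \<longleftrightarrow> (v, u) \<notin> A))"

definition vertex_ordering :: "'a set \<Rightarrow> 'a list \<Rightarrow> bool" where
  "vertex_ordering V \<sigma> \<longleftrightarrow> distinct \<sigma> \<and> set \<sigma> = V"

definition pos :: "'a list \<Rightarrow> 'a \<Rightarrow> nat" where
  "pos \<sigma> v = (THE i. i < length \<sigma> \<and> \<sigma> ! i = v)"

definition backward_arc :: "('a \<times> 'a) set \<Rightarrow> 'a list \<Rightarrow> 'a \<times> 'a \<Rightarrow> bool" where
  "backward_arc A \<sigma> e \<longleftrightarrow> e \<in> A \<and> pos \<sigma> (snd e) < pos \<sigma> (fst e)"

definition fully_sparse_wrt :: "'a set \<Rightarrow> ('a \<times> 'a) set \<Rightarrow> 'a list \<Rightarrow> bool" where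
  "fully_sparse_wrt V A \<sigma> \<longleftrightarrow> vertex_ordering V \<sigma> \<and>
     \<comment> \<open>backward arcs form a matching\<close>
     (\<forall>e f. backward_arc A \<sigma> e \<and> backward_arc A \<sigma> f \<and> e \<noteq> f \<longrightarrow>
        {fst e, snd e} \<inter> {fst f, snd f} = {}) \<and>
     \<comment> \<open>no backward arc joins consecutive vertices\<close>
     (\<forall>e. backward_arc A \<sigma> e \<longrightarrow> pos \<sigma> (fst e) \<noteq> Suc (pos \<sigma> (snd e))) \<and>
     \<comment> \<open>every vertex is head or tail of a backward arc\<close>
     (\<forall>v\<in>V. \<exists>e. backward_arc A \<sigma> e \<and> (v = fst e \<or> v = snd e))"

definition fully_sparse :: "'a set \<Rightarrow> ('a \<times> 'a) set \<Rightarrow> bool" where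
  "fully_sparse V A \<longleftrightarrow> (\<exists>\<sigma>. fully_sparse_wrt V A \<sigma>)"

definition is_dcycle :: "('a \<times> 'a) set \<Rightarrow> 'a list \<Rightarrow> bool" where
  "is_dcycle A xs \<longleftrightarrow> distinct xs \<and> length xs \<ge> 2 \<and>
     (\<forall>i < length xs. (xs ! i, xs ! ((i + 1) mod length xs)) \<in> A)"

definition cycle_arcs :: "'a list \<Rightarrow> ('a \<times> 'a) set" where
  "cycle_arcs xs = {(xs ! i, xs ! ((i + 1) mod length xs)) | i. i < length xs}"

definition cycle_packing :: "('a \<times> 'a) set \<Rightarrow> ('a \<times> 'a) set set \<Rightarrow> bool" where
  "cycle_packing A P \<longleftrightarrow>
     (\<forall>S\<in>P. \<exists>xs. is_dcycle A xs \<and> S = cycle_arcs xs) \<and>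
     (\<forall>S\<in>P. \<forall>T\<in>P. S \<noteq> T \<longrightarrow> S \<inter> T = {})"

definition triangle_packing :: "('a \<times> 'a) set \<Rightarrow> ('a \<times> 'a) set set \<Rightarrow> bool" where
  "triangle_packing A P \<longleftrightarrow>
     (\<forall>S\<in>P. \<exists>xs. is_dcycle A xs \<and> length xs = 3 \<and> S = cycle_arcs xs) \<and>
     (\<forall>S\<in>P. \<forall>T\<in>P. S \<noteq> T \<longrightarrow> S \<inter> T = {})"

definition max_cycle_packing :: "('a \<times> 'a) set \<Rightarrow> nat" where
  "max_cycle_packing A = Max {card P | P. cycle_packing A P}"

definition max_triangle_packing :: "('a \<times> 'a) set \<Rightarrow> nat" where
  "max_triangle_packing A = Max {card P | P. triangle_packing A P}"

end

theory Submission
  imports Defs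
begin

text \<open>Every directed cycle contains a backward arc, so a packing of k cycles yields k distinct
  backward arcs, each the widest backward arc of its own cycle. Each such arc i is completed
  to the triangle (head i, w i, tail i) by an apex w i strictly inside its span; these
  triangles are arc-disjoint unless two of the arcs i, j cross with w i = tail j and
  w j = head i. An arc with a vertex inside its span that is no endpoint of a crossing arc
  takes such a vertex as apex. Every other (blocked) arc i picks a crossing arc f i and takes
  its endpoint inside the span of i; clashes are avoided if f i = j and f j = i never happen
  together, which an orientation lemma of Hall type provides once every set X of blocked arcs
  closed under crossing contains at least |X| crossing pairs. These pairs come from the
  cycles: walking along the cycle of a blocked arc i from its head to its tail, the first
  step leaving the heads inside the span of i goes from the head of one arc to the tail of
  another, and the two cross.\<close>

section \<open>Choosing neighbours under a Hall condition\<close>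

definition edge_closed :: "'v set set \<Rightarrow> 'v set \<Rightarrow> bool" where
  "edge_closed E X \<longleftrightarrow> (\<forall>x\<in>X. \<forall>y. {x, y} \<in> E \<longrightarrow> y \<in> X)"

abbreviation spanned :: "'v set set \<Rightarrow> 'v set \<Rightarrow> 'v set set" where
  "spanned E X \<equiv> {e\<in>E. e \<subseteq> X}"

definition hall_condition :: "'v set set \<Rightarrow> 'v set \<Rightarrow> bool" where
  "hall_condition E N \<longleftrightarrow> (\<forall>X. X \<subseteq> N \<longrightarrow> edge_closed E X \<longrightarrow> card X \<le> card (spanned E X))"

lemma edge_closed_delete_edge:
  assumes "edge_closed (E - {{i, j}}) X" "i \<notin> X" "j \<notin> X"
  shows "edge_closed E X"
  unfolding edge_closed_def
proof (intro ballI allI impI)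
  fix x y assume xy: "x \<in> X" "{x, y} \<in> E"
  then have "{x, y} \<in> E - {{i, j}}" using assms(2,3) by (auto simp: doubleton_eq_iff)
  then show "y \<in> X" using xy(1) assms(1) unfolding edge_closed_def by blast
qed

lemma hall_violator_contains_end:
  assumes "hall_condition E N" "X \<subseteq> N - {i}" "edge_closed (E - {{i, j}}) X"
    "card (spanned (E - {{i, j}}) X) < card X"
  shows "j \<in> X"
proof (rule ccontr)
  assume "j \<notin> X"
  moreover have "i \<notin> X" using assms(2) by blast
  ultimately have "edge_closed E X" using edge_closed_delete_edge[OF assms(3)] by blast
  then have "card X \<le> card (spanned E X)"
    using assms(1,2) unfolding hall_condition_def by blast
  moreover have "spanned E X = spanned (E - {{i, j}}) X" using assms(2) by auto
  ultimately show False using assms(4) by simp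
qed

lemma card_spanned_Un_le:
  assumes "finite E" "\<forall>e\<in>E. card e = 2"
    and "edge_closed (E - {{i, j}}) X" "edge_closed (E - {{i, j}}) Y"
  shows "card (spanned E (X \<union> Y)) \<le> Suc (card (spanned (E - {{i, j}}) X \<union> spanned (E - {{i, j}}) Y))"
proof -
  let ?E' = "E - {{i, j}}"
  have "spanned E (X \<union> Y) \<subseteq> insert {i, j} (spanned ?E' X \<union> spanned ?E' Y)"
  proof
    fix e assume e: "e \<in> spanned E (X \<union> Y)"
    then have "card e = 2" using assms(2) by auto
    then obtain x y where e_xy: "e = {x, y}" by (meson card_2_iff)
    show "e \<in> insert {i, j} (spanned ?E' X \<union> spanned ?E' Y)"
    proof (cases "e = {i, j}")
      case False
      then have "{x, y} \<in> ?E'" "{y, x} \<in> ?E'" using e e_xy by (auto simp: insert_commute)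
      then show ?thesis
        using e e_xy assms(3,4) unfolding edge_closed_def by auto
    qed simp
  qed
  then have "card (spanned E (X \<union> Y)) \<le> card (insert {i, j} (spanned ?E' X \<union> spanned ?E' Y))"
    by (rule card_mono[rotated]) (use assms(1) in auto)
  also have "\<dots> \<le> Suc (card (spanned ?E' X \<union> spanned ?E' Y))"
    by (rule card_insert_le_m1) (simp_all only: zero_less_Suc diff_Suc_1 le_refl)
  finally show ?thesis .
qed

text \<open>If both deletions failed, violating sets X \<ni> j and Y \<ni> i would give closed sets
  X \<inter> Y and X \<union> Y whose vertex and edge counts, added up, contradict the Hall condition:
  only X \<union> Y spans the deleted edge.\<close>

lemma hall_condition_delete_edge:
  assumes "finite N" "finite E" "\<forall>e\<in>E. card e = 2" "hall_condition E N"
    and "{i, j} \<in> E"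
  shows "hall_condition (E - {{i, j}}) (N - {i}) \<or> hall_condition (E - {{i, j}}) (N - {j})"
proof (rule ccontr)
  let ?E' = "E - {{i, j}}"
  assume "\<not> ?thesis"
  then obtain X Y where X: "X \<subseteq> N - {i}" "edge_closed ?E' X" "card (spanned ?E' X) < card X"
    and Y: "Y \<subseteq> N - {j}" "edge_closed ?E' Y" "card (spanned ?E' Y) < card Y"
    unfolding hall_condition_def by (auto simp: not_le)
  have hall: "card Z \<le> card (spanned E Z)" if "Z \<subseteq> N" "edge_closed E Z" for Z
    using assms(4) that unfolding hall_condition_def by blast
  have "j \<in> X" using hall_violator_contains_end[OF assms(4) X] .
  have "i \<in> Y" using hall_violator_contains_end[of E N Y j i] assms(4) Y by (simp add: insert_commute)
  have "edge_closed ?E' (X \<inter> Y)"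
    using X(2) Y(2) unfolding edge_closed_def by blast
  then have "edge_closed E (X \<inter> Y)"
    by (rule edge_closed_delete_edge) (use X(1) Y(1) in auto)
  moreover have "spanned E (X \<inter> Y) = spanned ?E' X \<inter> spanned ?E' Y"
    using X(1) by auto
  ultimately have "card (X \<inter> Y) \<le> card (spanned ?E' X \<inter> spanned ?E' Y)"
    using hall[of "X \<inter> Y"] X(1) by auto
  moreover have "edge_closed E (X \<union> Y)"
    unfolding edge_closed_def
  proof (intro ballI allI impI)
    fix x y assume xy: "x \<in> X \<union> Y" "{x, y} \<in> E"
    show "y \<in> X \<union> Y"
    proof (cases "{x, y} = {i, j}")
      case True
      then show ?thesis using \<open>j \<in> X\<close> \<open>i \<in> Y\<close> by (auto simp: doubleton_eq_iff)
    next
      case False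
      then show ?thesis using xy X(2) Y(2) unfolding edge_closed_def by blast
    qed
  qed
  then have "card (X \<union> Y) \<le> card (spanned E (X \<union> Y))"
    using X(1) Y(1) by (intro hall) auto
  moreover have "card (spanned E (X \<union> Y)) \<le> Suc (card (spanned ?E' X \<union> spanned ?E' Y))"
    using card_spanned_Un_le[OF assms(2,3) X(2) Y(2)] .
  moreover have "card (spanned ?E' X \<union> spanned ?E' Y) + card (spanned ?E' X \<inter> spanned ?E' Y)
      = card (spanned ?E' X) + card (spanned ?E' Y)"
    by (rule card_Un_Int[symmetric]) (use assms(2) in auto)
  moreover have "card (X \<union> Y) + card (X \<inter> Y) = card X + card Y"
    by (rule card_Un_Int[symmetric]) (use X(1) Y(1) assms(1) in \<open>meson finite_Diff finite_subset\<close>)+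
  ultimately show False using X(3) Y(3) by linarith
qed

lemma hall_condition_closed_edge:
  assumes "finite N" "finite E" "\<forall>e\<in>E. card e = 2" "hall_condition E N"
    and "N \<noteq> {}" "edge_closed E N"
  obtains i j where "{i, j} \<in> E" "i \<in> N" "j \<in> N" "i \<noteq> j"
    "hall_condition (E - {{i, j}}) (N - {i})"
proof -
  have "card N \<le> card (spanned E N)"
    using assms(4,6) unfolding hall_condition_def by blast
  moreover have "card N > 0" using assms(1,5) by auto
  ultimately have "card (spanned E N) > 0" by linarith
  then obtain e where e: "e \<in> E" "e \<subseteq> N" by (auto simp: card_gt_0_iff)
  then obtain i j where ij: "e = {i, j}" "i \<noteq> j"
    using assms(3) by (meson card_2_iff)
  then have "{i, j} \<in> E" "i \<in> N" "j \<in> N" using e by auto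
  from hall_condition_delete_edge[OF assms(1-4) this(1)] show thesis
  proof
    assume "hall_condition (E - {{i, j}}) (N - {i})"
    then show thesis using that[of i j] \<open>{i, j} \<in> E\<close> \<open>i \<in> N\<close> \<open>j \<in> N\<close> ij(2) by blast
  next
    assume "hall_condition (E - {{i, j}}) (N - {j})"
    then show thesis using that[of j i] \<open>{i, j} \<in> E\<close> \<open>i \<in> N\<close> \<open>j \<in> N\<close> ij(2)
      by (simp add: insert_commute)
  qed
qed

text \<open>Induction on N: an element with an edge leaving N may point outside; otherwise N is
  closed and an edge {i,j} can be handed to i alone, i pointing at j.\<close>

lemma hall_condition_imp_choice:
  assumes "finite N" "finite E" "\<forall>e\<in>E. card e = 2" "hall_condition E N"
  shows "\<exists>f. \<forall>x\<in>N. {x, f x} \<in> E \<and> (f x \<in> N \<longrightarrow> f (f x) \<noteq> x)"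
  using assms
proof (induction "card N" arbitrary: N E rule: less_induct)
  case less
  consider "N = {}" | "\<exists>i\<in>N. \<exists>y. y \<notin> N \<and> {i, y} \<in> E" | "N \<noteq> {}" "edge_closed E N"
    unfolding edge_closed_def by blast
  then show ?case
  proof cases
    case 1
    then show ?thesis by simp
  next
    case 2
    then obtain i y where i: "i \<in> N" "y \<notin> N" "{i, y} \<in> E" by blast
    have "hall_condition E (N - {i})"
      using less.prems(4) unfolding hall_condition_def by blast
    moreover have "card (N - {i}) < card N"
      using i less.prems(1) by (meson card_Diff1_less)
    ultimately obtain f where f: "\<forall>x\<in>N - {i}. {x, f x} \<in> E \<and> (f x \<in> N - {i} \<longrightarrow> f (f x) \<noteq> x)"
      using less.hyps[of "N - {i}" E] less.prems by auto
    have "\<forall>x\<in>N. {x, (f(i := y)) x} \<in> E \<and> ((f(i := y)) x \<in> N \<longrightarrow> (f(i := y)) ((f(i := y)) x) \<noteq> x)"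
      using f i by auto
    then show ?thesis by blast
  next
    case 3
    then obtain i j where ij: "{i, j} \<in> E" "i \<in> N" "j \<in> N" "i \<noteq> j"
        "hall_condition (E - {{i, j}}) (N - {i})"
      using hall_condition_closed_edge[OF less.prems] by blast
    have "card (N - {i}) < card N"
      using ij less.prems(1) by (meson card_Diff1_less)
    then obtain f where f: "\<forall>x\<in>N - {i}. {x, f x} \<in> E - {{i, j}} \<and> (f x \<in> N - {i} \<longrightarrow> f (f x) \<noteq> x)"
      using less.hyps[of "N - {i}" "E - {{i, j}}"] less.prems ij by auto
    have "{j, f j} \<in> E - {{i, j}}" using f ij by blast
    then have "f j \<noteq> i" by (auto simp: insert_commute)
    then have "\<forall>x\<in>N. {x, (f(i := j)) x} \<in> E \<and> ((f(i := j)) x \<in> N \<longrightarrow> (f(i := j)) ((f(i := j)) x) \<noteq> x)"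
      using f ij by (auto simp: insert_commute)
    then show ?thesis by blast
  qed
qed

lemma pos_nth:
  assumes "distinct \<sigma>" "x \<in> set \<sigma>"
  shows "pos \<sigma> x < length \<sigma> \<and> \<sigma> ! pos \<sigma> x = x"
proof -
  obtain i where i: "i < length \<sigma>" "\<sigma> ! i = x"
    using assms(2) by (metis in_set_conv_nth)
  have "pos \<sigma> x = i"
    unfolding pos_def using i nth_eq_iff_index_eq[OF assms(1)] by (intro the_equality) blast+
  then show ?thesis using i by simp
qed

lemma pos_eq_imp_eq:
  assumes "distinct \<sigma>" "x \<in> set \<sigma>" "y \<in> set \<sigma>" "pos \<sigma> x = pos \<sigma> y"
  shows "x = y"
  using pos_nth[OF assms(1)] assms(2-4) by metis

lemma nat_exit_step:
  fixes P :: "nat \<Rightarrow> bool"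
  assumes "a \<le> b" "P a" "\<not> P b"
  shows "\<exists>s. a \<le> s \<and> s < b \<and> P s \<and> \<not> P (Suc s)"
  using assms
proof (induction b)
  case (Suc b)
  then show ?case
    by (cases "P b") (auto simp: le_Suc_eq intro: less_SucI)
qed simp

lemma cycle_arc_closing_walk:
  assumes "(v, u) \<in> cycle_arcs xs"
  shows "\<exists>z m. z 0 = u \<and> z m = v \<and> (\<forall>t<m. (z t, z (Suc t)) \<in> cycle_arcs xs)"
proof -
  let ?n = "length xs"
  obtain j where j: "j < ?n" "v = xs ! j" "u = xs ! ((j + 1) mod ?n)"
    using assms unfolding cycle_arcs_def by auto
  define z where "z t = xs ! ((j + 1 + t) mod ?n)" for t
  have "j + 1 + (?n - 1) = j + ?n" using j by simp
  then have "(j + 1 + (?n - 1)) mod ?n = j" using j by simp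
  then have "z (?n - 1) = v" using z_def j by simp
  moreover have "(z t, z (Suc t)) \<in> cycle_arcs xs" for t
  proof -
    have "((j + 1 + t) mod ?n + 1) mod ?n = (j + 1 + Suc t) mod ?n"
      by (simp add: mod_Suc_eq)
    moreover have "(j + 1 + t) mod ?n < ?n" using j(1) by (intro mod_less_divisor) linarith
    ultimately show ?thesis
      unfolding cycle_arcs_def z_def by (metis (mono_tags, lifting) mem_Collect_eq)
  qed
  moreover have "z 0 = u" using j by (simp add: z_def)
  ultimately show ?thesis by blast
qed

lemma finite_cycle_arcs: "finite (cycle_arcs xs)"
proof -
  have "cycle_arcs xs = (\<lambda>i. (xs ! i, xs ! ((i + 1) mod length xs))) ` {..<length xs}"
    unfolding cycle_arcs_def by auto
  then show ?thesis by simp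
qed

lemma cycle_arcs_subset: "is_dcycle A xs \<Longrightarrow> cycle_arcs xs \<subseteq> A"
  unfolding is_dcycle_def cycle_arcs_def by auto

lemma cycle_arcs_triangle: "cycle_arcs [a, b, c] = {(a, b), (b, c), (c, a)}"
proof -
  have indices: "{i. i < length [a, b, c]} = {0, 1, 2}" by auto
  have "cycle_arcs [a, b, c]
      = (\<lambda>i. ([a, b, c] ! i, [a, b, c] ! ((i + 1) mod length [a, b, c]))) ` {i. i < length [a, b, c]}"
    unfolding cycle_arcs_def by (rule setcompr_eq_image)
  also have "\<dots> = (\<lambda>i. ([a, b, c] ! i, [a, b, c] ! ((i + 1) mod 3))) ` {0, 1, 2}"
    unfolding indices by simp
  finally show ?thesis by simp
qed

lemma is_dcycle_triangle:
  assumes "distinct [a, b, c]" "(a, b) \<in> A" "(b, c) \<in> A" "(c, a) \<in> A"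
  shows "is_dcycle A [a, b, c]"
  unfolding is_dcycle_def using assms by (auto simp: less_Suc_eq)

lemma triangle_packing_imp_cycle_packing: "triangle_packing A P \<Longrightarrow> cycle_packing A P"
  unfolding triangle_packing_def cycle_packing_def by (elim conjE) (intro conjI; fast)

lemma max_cycle_packing_eq_max_triangle_packing:
  assumes "\<And>P. cycle_packing A P \<Longrightarrow> \<exists>Q. triangle_packing A Q \<and> card Q = card P"
  shows "max_cycle_packing A = max_triangle_packing A"
proof -
  have "{card P | P. cycle_packing A P} = {card P | P. triangle_packing A P}" (is "?C = ?T")
  proof
    show "?C \<subseteq> ?T"
    proof
      fix n assume "n \<in> ?C"
      then obtain P where "cycle_packing A P" "n = card P" by blast
      with assms obtain Q where "triangle_packing A Q" "card Q = n" by metis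
      then show "n \<in> ?T" by blast
    qed
    show "?T \<subseteq> ?C" using triangle_packing_imp_cycle_packing by blast
  qed
  then show ?thesis
    unfolding max_cycle_packing_def max_triangle_packing_def by simp
qed

definition crosses :: "'a list \<Rightarrow> 'a \<times> 'a \<Rightarrow> 'a \<times> 'a \<Rightarrow> bool" where
  "crosses \<sigma> i j \<longleftrightarrow>
    (pos \<sigma> (snd i) < pos \<sigma> (snd j) \<and> pos \<sigma> (snd j) < pos \<sigma> (fst i) \<and> pos \<sigma> (fst i) < pos \<sigma> (fst j)) \<or>
    (pos \<sigma> (snd j) < pos \<sigma> (snd i) \<and> pos \<sigma> (snd i) < pos \<sigma> (fst j) \<and> pos \<sigma> (fst j) < pos \<sigma> (fst i))"

lemma crosses_sym: "crosses \<sigma> i j \<Longrightarrow> crosses \<sigma> j i"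
  unfolding crosses_def by auto

lemma crosses_irrefl: "\<not> crosses \<sigma> i i"
  unfolding crosses_def by auto

definition arc_width :: "'a list \<Rightarrow> 'a \<times> 'a \<Rightarrow> nat" where
  "arc_width \<sigma> e = pos \<sigma> (fst e) - pos \<sigma> (snd e)"

definition inside :: "'a list \<Rightarrow> 'a \<times> 'a \<Rightarrow> 'a \<Rightarrow> bool" where
  "inside \<sigma> e x \<longleftrightarrow> pos \<sigma> (snd e) < pos \<sigma> x \<and> pos \<sigma> x < pos \<sigma> (fst e)"

definition blocked :: "'a set \<Rightarrow> 'a list \<Rightarrow> ('a \<times> 'a) set \<Rightarrow> 'a \<times> 'a \<Rightarrow> bool" where
  "blocked V \<sigma> S i \<longleftrightarrow>
     (\<forall>x\<in>V. inside \<sigma> i x \<longrightarrow> (\<exists>j\<in>S. crosses \<sigma> i j \<and> (x = fst j \<or> x = snd j)))"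

definition crossing_graph :: "'a list \<Rightarrow> ('a \<times> 'a) set \<Rightarrow> ('a \<times> 'a) set set" where
  "crossing_graph \<sigma> S = {{k, l} | k l. k \<in> S \<and> l \<in> S \<and> crosses \<sigma> k l}"

lemma crossing_graph_card: "e \<in> crossing_graph \<sigma> S \<Longrightarrow> card e = 2"
  unfolding crossing_graph_def using crosses_irrefl by (fastforce simp: card_insert_if)

lemma finite_crossing_graph:
  assumes "finite S"
  shows "finite (crossing_graph \<sigma> S)"
proof -
  have "crossing_graph \<sigma> S \<subseteq> (\<lambda>(k, l). {k, l}) ` (S \<times> S)"
    unfolding crossing_graph_def by auto
  then show ?thesis using assms by (meson finite_SigmaI finite_imageI finite_subset)
qed

lemma crossing_graph_edgeD:
  assumes "{i, x} \<in> crossing_graph \<sigma> S"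
  shows "x \<in> S \<and> crosses \<sigma> i x"
proof -
  obtain k l where kl: "{i, x} = {k, l}" "k \<in> S" "l \<in> S" "crosses \<sigma> k l"
    using assms unfolding crossing_graph_def by blast
  then have "k \<noteq> l" using crosses_irrefl by metis
  then have "(i = k \<and> x = l) \<or> (i = l \<and> x = k)" using kl(1) by (auto simp: doubleton_eq_iff)
  then show ?thesis using kl crosses_sym by blast
qed

lemma edge_closed_crossing_graph:
  assumes "edge_closed (crossing_graph \<sigma> S) X" "X \<subseteq> S" "i \<in> X"
    and "x \<in> S" "x = i \<or> crosses \<sigma> i x"
  shows "x \<in> X"
proof (cases "x = i")
  case False
  then have "{i, x} \<in> crossing_graph \<sigma> S"
    using assms unfolding crossing_graph_def by blast
  then show ?thesis using assms(1,3) unfolding edge_closed_def by blast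
qed (use assms(3) in simp)

definition charged_pair ::
    "'a list \<Rightarrow> ('a \<times> 'a) set \<Rightarrow> ('a \<times> 'a) set \<Rightarrow> 'a \<times> 'a \<Rightarrow> 'a \<times> 'a \<Rightarrow> 'a \<times> 'a \<Rightarrow> bool" where
  "charged_pair \<sigma> S C i k l \<longleftrightarrow> k \<in> S \<and> l \<in> S \<and> (k = i \<or> crosses \<sigma> i k) \<and> (l = i \<or> crosses \<sigma> i l)
     \<and> (snd k, fst l) \<in> C \<and> pos \<sigma> (snd l) < pos \<sigma> (snd k) \<and> crosses \<sigma> k l"

locale backward_matching =
  fixes V :: "'a set" and A :: "('a \<times> 'a) set" and \<sigma> :: "'a list"
  assumes tournament: "tournament V A"
    and ordering: "vertex_ordering V \<sigma>"
    and matching: "\<And>e f. backward_arc A \<sigma> e \<Longrightarrow> backward_arc A \<sigma> f \<Longrightarrow> e \<noteq> f \<Longrightarrow>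
      {fst e, snd e} \<inter> {fst f, snd f} = {}"
begin

abbreviation p :: "'a \<Rightarrow> nat" where "p \<equiv> pos \<sigma>"

definition M :: "('a \<times> 'a) set" where "M = {e. backward_arc A \<sigma> e}"

lemma finite_arcs: "finite A"
  using tournament unfolding tournament_def by (meson finite_SigmaI finite_subset)

lemma arc_ends: "(x, y) \<in> A \<Longrightarrow> x \<in> V \<and> y \<in> V \<and> x \<noteq> y"
  using tournament unfolding tournament_def by blast

lemma arc_asym: "(x, y) \<in> A \<Longrightarrow> (y, x) \<notin> A"
  using tournament arc_ends[of x y] unfolding tournament_def by simp

lemma pos_inj: "x \<in> V \<Longrightarrow> y \<in> V \<Longrightarrow> p x = p y \<Longrightarrow> x = y"
  using ordering pos_eq_imp_eq unfolding vertex_ordering_def by metis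

lemma backward_arcD: "e \<in> M \<Longrightarrow> e \<in> A \<and> p (snd e) < p (fst e)"
  unfolding M_def backward_arc_def by auto

lemma backward_arc_ends: "e \<in> M \<Longrightarrow> fst e \<in> V \<and> snd e \<in> V"
  using backward_arcD arc_ends by (metis prod.collapse)

lemma arc_forward_or_backward:
  assumes "(x, y) \<in> A"
  shows "p x < p y \<or> (x, y) \<in> M"
proof -
  have "p x \<noteq> p y" using arc_ends[OF assms] pos_inj by blast
  then show ?thesis using assms unfolding M_def backward_arc_def by auto
qed

lemma backward_arcs_share_end:
  assumes "e \<in> M" "f \<in> M" "x \<in> {fst e, snd e}" "x \<in> {fst f, snd f}"
  shows "e = f"
  using matching assms unfolding M_def by blast

lemma backward_tail_ne_head: "e \<in> M \<Longrightarrow> f \<in> M \<Longrightarrow> fst e \<noteq> snd f"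
  using backward_arcs_share_end backward_arcD by (metis insertI1 insert_commute less_irrefl)

lemma forward_arcI:
  assumes "x \<in> V" "y \<in> V" "p x < p y" "(y, x) \<notin> M"
  shows "(x, y) \<in> A"
proof -
  have "(y, x) \<notin> A" using assms unfolding M_def backward_arc_def by auto
  then show ?thesis
    using tournament assms unfolding tournament_def by (metis less_irrefl)
qed

lemma dcycle_has_backward_arc:
  assumes "is_dcycle A xs"
  shows "cycle_arcs xs \<inter> M \<noteq> {}"
proof
  assume forward: "cycle_arcs xs \<inter> M = {}"
  let ?n = "length xs"
  have n: "?n \<ge> 2" using assms unfolding is_dcycle_def by simp
  have step: "p (xs ! t) < p (xs ! ((t + 1) mod ?n))" if "t < ?n" for t
  proof -
    have "(xs ! t, xs ! ((t + 1) mod ?n)) \<in> cycle_arcs xs"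
      unfolding cycle_arcs_def using that by auto
    then show ?thesis
      using cycle_arcs_subset[OF assms] arc_forward_or_backward forward by blast
  qed
  have climb: "p (xs ! 0) + t \<le> p (xs ! t)" if "t < ?n" for t
    using that
  proof (induction t)
    case (Suc t)
    then show ?case using step[of t] by simp
  qed simp
  have "?n - 1 + 1 = ?n" using n by simp
  then have "p (xs ! (?n - 1)) < p (xs ! 0)"
    using step[of "?n - 1"] n by simp
  moreover have "p (xs ! 0) + (?n - 1) \<le> p (xs ! (?n - 1))"
    using climb[of "?n - 1"] n by simp
  ultimately show False using n by simp
qed

end

lemma fully_sparse_wrt_imp_backward_matching:
  "tournament V A \<Longrightarrow> fully_sparse_wrt V A \<sigma> \<Longrightarrow> backward_matching V A \<sigma>"
  unfolding fully_sparse_wrt_def backward_matching_def by blast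

section \<open>The cycle through a blocked widest backward arc\<close>

locale widest_arc_walk = backward_matching +
  fixes S C :: "('a \<times> 'a) set" and i :: "'a \<times> 'a" and z :: "nat \<Rightarrow> 'a" and m :: nat
  assumes S_backward: "S \<subseteq> M"
    and S_meets_C: "S \<inter> C = {i}"
    and C_arcs: "C \<subseteq> A"
    and widest: "\<And>e. e \<in> C \<inter> M \<Longrightarrow> arc_width \<sigma> e \<le> arc_width \<sigma> i"
    and i_blocked: "blocked V \<sigma> S i"
    and walk_start: "z 0 = snd i"
    and walk_end: "z m = fst i"
    and walk_arcs: "\<And>t. t < m \<Longrightarrow> (z t, z (Suc t)) \<in> C"
begin

lemma i_in: "i \<in> S" "i \<in> C" "i \<in> M"
  using S_meets_C S_backward by auto

lemma i_ends: "fst i \<in> V" "snd i \<in> V" "p (snd i) < p (fst i)"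
  using backward_arc_ends backward_arcD i_in(3) by auto

lemma walk_in_V: "t \<le> m \<Longrightarrow> z t \<in> V"
proof (cases t)
  case (Suc s)
  moreover assume "t \<le> m"
  ultimately have "(z s, z t) \<in> A" using walk_arcs C_arcs by auto
  then show ?thesis using arc_ends by blast
qed (use walk_start i_ends in simp)

lemma blocked_inside:
  "x \<in> V \<Longrightarrow> inside \<sigma> i x \<Longrightarrow> \<exists>j\<in>S. crosses \<sigma> i j \<and> (x = fst j \<or> x = snd j)"
  using i_blocked unfolding blocked_def by blast

text \<open>Once the walk passes the tail of i it must come back over it by a backward arc of C;
  its head cannot lie inside the span of i (it would be the endpoint of a crossing arc of S,
  which does not lie on C), so that arc would be wider than i.\<close>

lemma walk_not_beyond_tail:
  assumes "t \<le> m"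
  shows "p (z t) \<le> p (fst i)"
proof (rule ccontr)
  assume "\<not> ?thesis"
  then obtain s where s: "s < m" "p (fst i) < p (z s)" "\<not> p (fst i) < p (z (Suc s))"
    using nat_exit_step[of t m "\<lambda>s. p (fst i) < p (z s)"] assms walk_end by auto
  define e where "e = (z s, z (Suc s))"
  have "e \<in> C" using walk_arcs s(1) e_def by simp
  moreover have "e \<in> A" using \<open>e \<in> C\<close> C_arcs by blast
  ultimately have "e \<in> M" using arc_forward_or_backward s e_def by fastforce
  have "snd e \<in> V" using backward_arc_ends[OF \<open>e \<in> M\<close>] by simp
  have "snd e \<noteq> fst i" using backward_tail_ne_head[OF i_in(3) \<open>e \<in> M\<close>] by simp
  moreover have "\<not> inside \<sigma> i (snd e)"
  proof
    assume "inside \<sigma> i (snd e)"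
    then obtain j where j: "j \<in> S" "crosses \<sigma> i j" "snd e = fst j \<or> snd e = snd j"
      using blocked_inside \<open>snd e \<in> V\<close> by blast
    then have "e = j" using backward_arcs_share_end[OF \<open>e \<in> M\<close>] S_backward by blast
    moreover have "j \<noteq> i" using j(2) crosses_irrefl by metis
    ultimately show False using j(1) \<open>e \<in> C\<close> S_meets_C by blast
  qed
  moreover have "snd e \<noteq> snd i"
  proof
    assume "snd e = snd i"
    then have "e = i" using backward_arcs_share_end[OF \<open>e \<in> M\<close> i_in(3), of "snd i"] by simp
    then show False using s(2) unfolding e_def by (metis fst_conv less_irrefl)
  qed
  ultimately have "p (snd e) < p (snd i)"
    using s(3) e_def pos_inj[OF \<open>snd e \<in> V\<close>] i_ends unfolding inside_def by fastforce
  then have "arc_width \<sigma> i < arc_width \<sigma> e"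
    using s(2) e_def i_ends unfolding arc_width_def by simp
  then show False using widest \<open>e \<in> C\<close> \<open>e \<in> M\<close> by fastforce
qed

definition inner_head :: "'a \<Rightarrow> bool" where
  "inner_head x \<longleftrightarrow> x = snd i \<or> (inside \<sigma> i x \<and> (\<exists>k\<in>M. x = snd k))"

lemma exit_arc:
  obtains a c where "(a, c) \<in> C" "inner_head a" "\<not> inner_head c" "c \<in> V"
    "p (snd i) \<le> p a" "p a < p c" "p c \<le> p (fst i)"
proof -
  have "\<not> inner_head (z m)"
    using walk_end i_ends unfolding inner_head_def inside_def by auto
  then obtain s where s: "s < m" "inner_head (z s)" "\<not> inner_head (z (Suc s))"
    using nat_exit_step[of 0 m "\<lambda>t. inner_head (z t)"] walk_start unfolding inner_head_def by auto
  have arc: "(z s, z (Suc s)) \<in> C" using walk_arcs s(1) by simp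
  obtain k where "k \<in> M" "z s = snd k"
    using s(2) i_in(3) unfolding inner_head_def by blast
  then have "(z s, z (Suc s)) \<notin> M"
    using backward_tail_ne_head by (metis fst_conv)
  then have "p (z s) < p (z (Suc s))"
    using arc C_arcs arc_forward_or_backward by blast
  moreover have "p (snd i) \<le> p (z s)"
    using s(2) unfolding inner_head_def inside_def by auto
  ultimately show thesis
    using that arc s walk_in_V walk_not_beyond_tail by simp
qed

lemma inner_head_cases:
  assumes "inner_head a"
  shows "a = snd i \<or> (\<exists>k\<in>S. crosses \<sigma> i k \<and> a = snd k \<and> inside \<sigma> i a)"
proof (cases "a = snd i")
  case False
  then obtain k where k: "inside \<sigma> i a" "k \<in> M" "a = snd k"
    using assms unfolding inner_head_def by blast
  then obtain j where j: "j \<in> S" "crosses \<sigma> i j" "a = fst j \<or> a = snd j"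
    using blocked_inside backward_arc_ends by blast
  then have "k = j" using backward_arcs_share_end[OF k(2)] k(3) S_backward by blast
  then show ?thesis using j k by blast
qed simp

lemma exit_point_cases:
  assumes "\<not> inner_head c" "c \<in> V" "p (snd i) < p c" "p c \<le> p (fst i)"
  shows "c = fst i \<or> (\<exists>l\<in>S. crosses \<sigma> i l \<and> c = fst l \<and> inside \<sigma> i c)"
proof (cases "c = fst i")
  case False
  then have "inside \<sigma> i c"
    using assms(2-4) pos_inj i_ends unfolding inside_def by fastforce
  then obtain j where j: "j \<in> S" "crosses \<sigma> i j" "c = fst j \<or> c = snd j"
    using blocked_inside assms(2) by blast
  have "c \<noteq> snd j"
    using assms(1) \<open>inside \<sigma> i c\<close> j(1) S_backward unfolding inner_head_def by blast
  then show ?thesis using j \<open>inside \<sigma> i c\<close> by blast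
qed simp

lemma walk_crossing_pair: "\<exists>k l. charged_pair \<sigma> S C i k l"
proof -
  obtain a c where ac: "(a, c) \<in> C" "inner_head a" "\<not> inner_head c" "c \<in> V"
      "p (snd i) \<le> p a" "p a < p c" "p c \<le> p (fst i)"
    by (rule exit_arc)
  obtain k where k: "k \<in> S" "k = i \<or> crosses \<sigma> i k" "a = snd k" "k \<noteq> i \<Longrightarrow> inside \<sigma> i a"
    using inner_head_cases[OF ac(2)] i_in(1) by blast
  obtain l where l: "l \<in> S" "l = i \<or> crosses \<sigma> i l" "c = fst l" "l \<noteq> i \<Longrightarrow> inside \<sigma> i c"
    using exit_point_cases[OF ac(3,4)] ac(5-7) i_in(1) by fastforce
  have "\<not> (k = i \<and> l = i)"
    using ac(1) C_arcs i_in(2) arc_asym k(3) l(3) by (metis prod.collapse subsetD)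
  then have "p (snd l) < p (snd k) \<and> crosses \<sigma> k l"
    using k l ac(5-7) i_ends unfolding crosses_def inside_def by auto
  then have "charged_pair \<sigma> S C i k l"
    unfolding charged_pair_def using k(1-3) l(1-3) ac(1) by simp
  then show ?thesis by blast
qed

end

context backward_matching
begin

definition owns_cycle :: "('a \<times> 'a) set \<Rightarrow> 'a \<times> 'a \<Rightarrow> 'a list \<Rightarrow> bool" where
  "owns_cycle S i xs \<longleftrightarrow> is_dcycle A xs \<and> S \<inter> cycle_arcs xs = {i}
     \<and> (\<forall>e\<in>cycle_arcs xs \<inter> M. arc_width \<sigma> e \<le> arc_width \<sigma> i)"

lemma blocked_crossing_pair:
  assumes "S \<subseteq> M" "owns_cycle S i xs" "blocked V \<sigma> S i"
  shows "\<exists>k l. charged_pair \<sigma> S (cycle_arcs xs) i k l"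
proof -
  have cycle: "is_dcycle A xs" "S \<inter> cycle_arcs xs = {i}"
    "\<And>e. e \<in> cycle_arcs xs \<inter> M \<Longrightarrow> arc_width \<sigma> e \<le> arc_width \<sigma> i"
    using assms(2) unfolding owns_cycle_def by auto
  have "i \<in> cycle_arcs xs" using cycle(2) by blast
  then have "(fst i, snd i) \<in> cycle_arcs xs" by simp
  then obtain z m where walk: "z 0 = snd i" "z m = fst i" "\<forall>t<m. (z t, z (Suc t)) \<in> cycle_arcs xs"
    using cycle_arc_closing_walk[of "fst i" "snd i" xs] by blast
  interpret widest_arc_walk V A \<sigma> S "cycle_arcs xs" i z m
    using assms(1,3) cycle walk cycle_arcs_subset[OF cycle(1)] by unfold_locales simp_all
  show ?thesis by (rule walk_crossing_pair)
qed

end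

section \<open>From cycle packings to triangle packings\<close>

context backward_matching
begin

lemma backward_arcs_subset: "M \<subseteq> A"
  using backward_arcD by blast

lemma widest_backward_arc_exists:
  assumes "is_dcycle A xs"
  shows "\<exists>e. e \<in> cycle_arcs xs \<inter> M \<and> (\<forall>e'\<in>cycle_arcs xs \<inter> M. arc_width \<sigma> e' \<le> arc_width \<sigma> e)"
proof -
  let ?B = "cycle_arcs xs \<inter> M"
  have "finite ?B" by (simp add: finite_cycle_arcs)
  moreover have "?B \<noteq> {}" using dcycle_has_backward_arc[OF assms] .
  ultimately have "Max (arc_width \<sigma> ` ?B) \<in> arc_width \<sigma> ` ?B" by simp
  then obtain e where e: "e \<in> ?B" "arc_width \<sigma> e = Max (arc_width \<sigma> ` ?B)" by auto
  then have "\<forall>e'\<in>?B. arc_width \<sigma> e' \<le> arc_width \<sigma> e" using \<open>finite ?B\<close> by simp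
  then show ?thesis using e(1) by blast
qed

lemma widest_backward_arcs:
  assumes "cycle_packing A P"
  obtains S cyc where "S \<subseteq> M" "card S = card P" "\<And>i. i \<in> S \<Longrightarrow> owns_cycle S i (cyc i)"
    "\<And>i j. i \<in> S \<Longrightarrow> j \<in> S \<Longrightarrow> i \<noteq> j \<Longrightarrow> cycle_arcs (cyc i) \<inter> cycle_arcs (cyc j) = {}"
proof -
  have cycles: "\<forall>C\<in>P. \<exists>xs. is_dcycle A xs \<and> C = cycle_arcs xs"
    and disjoint: "\<And>C D. C \<in> P \<Longrightarrow> D \<in> P \<Longrightarrow> C \<noteq> D \<Longrightarrow> C \<inter> D = {}"
    using assms unfolding cycle_packing_def by blast+
  obtain xs where xs: "\<And>C. C \<in> P \<Longrightarrow> is_dcycle A (xs C) \<and> C = cycle_arcs (xs C)"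
    using bchoice[OF cycles] by blast
  have "\<forall>C\<in>P. \<exists>e. e \<in> C \<inter> M \<and> (\<forall>e'\<in>C \<inter> M. arc_width \<sigma> e' \<le> arc_width \<sigma> e)"
  proof
    fix C assume "C \<in> P"
    then show "\<exists>e. e \<in> C \<inter> M \<and> (\<forall>e'\<in>C \<inter> M. arc_width \<sigma> e' \<le> arc_width \<sigma> e)"
      using widest_backward_arc_exists[of "xs C"] xs[of C] by metis
  qed
  from bchoice[OF this] obtain b
    where b: "\<forall>C\<in>P. b C \<in> C \<inter> M \<and> (\<forall>e\<in>C \<inter> M. arc_width \<sigma> e \<le> arc_width \<sigma> (b C))" ..
  have b_in: "b C \<in> C" "b C \<in> M" if "C \<in> P" for C
    using b that by auto
  have b_eq: "C = D" if "C \<in> P" "D \<in> P" "b C \<in> D" for C D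
    using disjoint[OF that(1,2)] b_in[OF that(1)] that(3) by blast
  have "inj_on b P"
    by (rule inj_onI) (use b_eq b_in in metis)
  define cyc where "cyc i = xs (inv_into P b i)" for i
  have cyc_b: "cyc (b C) = xs C" if "C \<in> P" for C
    unfolding cyc_def using \<open>inj_on b P\<close> that by simp
  show thesis
  proof (rule that[of "b ` P" cyc])
    show "b ` P \<subseteq> M" "card (b ` P) = card P"
      using b_in card_image[OF \<open>inj_on b P\<close>] by auto
  next
    fix i assume "i \<in> b ` P"
    then obtain C where C: "C \<in> P" "i = b C" by blast
    have "b ` P \<inter> C = {i}"
      using C b_in b_eq by blast
    then show "owns_cycle (b ` P) i (cyc i)"
      unfolding owns_cycle_def using xs[OF C(1)] b C cyc_b[OF C(1)] by simp
  next
    fix i j assume "i \<in> b ` P" "j \<in> b ` P" "i \<noteq> j"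
    then obtain C D where "C \<in> P" "D \<in> P" "i = b C" "j = b D" "C \<noteq> D" by blast
    then show "cycle_arcs (cyc i) \<inter> cycle_arcs (cyc j) = {}"
      using xs cyc_b disjoint by simp
  qed
qed

lemma blocked_charged_pairs:
  assumes "S \<subseteq> M" "\<And>i. i \<in> S \<Longrightarrow> owns_cycle S i (cyc i)"
  shows "\<exists>k l. \<forall>i\<in>{i\<in>S. blocked V \<sigma> S i}. charged_pair \<sigma> S (cycle_arcs (cyc i)) i (k i) (l i)"
proof -
  let ?N = "{i\<in>S. blocked V \<sigma> S i}"
  have "\<forall>i\<in>?N. \<exists>kl. charged_pair \<sigma> S (cycle_arcs (cyc i)) i (fst kl) (snd kl)"
  proof
    fix i assume "i \<in> ?N"
    then obtain k l where "charged_pair \<sigma> S (cycle_arcs (cyc i)) i k l"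
      using blocked_crossing_pair[OF assms(1) assms(2)] by blast
    then show "\<exists>kl. charged_pair \<sigma> S (cycle_arcs (cyc i)) i (fst kl) (snd kl)"
      by (intro exI[of _ "(k, l)"]) simp
  qed
  from bchoice[OF this] obtain kl
    where charged: "\<forall>i\<in>?N. charged_pair \<sigma> S (cycle_arcs (cyc i)) i (fst (kl i)) (snd (kl i))" ..
  show ?thesis
    by (rule exI[of _ "\<lambda>i. fst (kl i)"], rule exI[of _ "\<lambda>i. snd (kl i)"]) (fact charged)
qed

text \<open>A blocked arc i is charged to the crossing pair found in its own cycle; since the cycles
  are arc-disjoint these pairs are distinct, and they stay inside any closed set containing i.\<close>

lemma hall_condition_blocked:
  assumes "S \<subseteq> M" "finite S" "\<And>i. i \<in> S \<Longrightarrow> owns_cycle S i (cyc i)"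
    and disjoint: "\<And>i j. i \<in> S \<Longrightarrow> j \<in> S \<Longrightarrow> i \<noteq> j \<Longrightarrow> cycle_arcs (cyc i) \<inter> cycle_arcs (cyc j) = {}"
  shows "hall_condition (crossing_graph \<sigma> S) {i\<in>S. blocked V \<sigma> S i}"
proof -
  let ?N = "{i\<in>S. blocked V \<sigma> S i}"
  obtain k l where charged: "\<forall>i\<in>?N. charged_pair \<sigma> S (cycle_arcs (cyc i)) i (k i) (l i)"
    using blocked_charged_pairs[OF assms(1,3)] by blast
  have kl: "k i \<in> S" "l i \<in> S" "k i = i \<or> crosses \<sigma> i (k i)" "l i = i \<or> crosses \<sigma> i (l i)"
    "(snd (k i), fst (l i)) \<in> cycle_arcs (cyc i)" "p (snd (l i)) < p (snd (k i))"
    "crosses \<sigma> (k i) (l i)" if "i \<in> ?N" for i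
    using bspec[OF charged that] unfolding charged_pair_def by simp_all
  let ?edge = "\<lambda>i. {k i, l i}"
  have "inj_on ?edge ?N"
  proof (rule inj_onI)
    fix i j assume ij: "i \<in> ?N" "j \<in> ?N" "?edge i = ?edge j"
    have "\<not> (k i = l j \<and> l i = k j)"
      using kl[OF ij(1)] kl[OF ij(2)] by auto
    then have "k i = k j" "l i = l j"
      using ij(3) unfolding doubleton_eq_iff by auto
    then have "cycle_arcs (cyc i) \<inter> cycle_arcs (cyc j) \<noteq> {}"
      using kl[OF ij(1)] kl[OF ij(2)] by auto
    then show "i = j" using disjoint ij(1,2) by blast
  qed
  show ?thesis
    unfolding hall_condition_def
  proof (intro allI impI)
    fix X assume X: "X \<subseteq> ?N" "edge_closed (crossing_graph \<sigma> S) X"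
    have "?edge i \<in> spanned (crossing_graph \<sigma> S) X" if "i \<in> X" for i
    proof -
      have iN: "i \<in> ?N" using that X(1) by blast
      have "X \<subseteq> S" using X(1) by blast
      then have "k i \<in> X" "l i \<in> X"
        using edge_closed_crossing_graph[OF X(2) _ that] kl(1-4)[OF iN] by simp_all
      moreover have "?edge i \<in> crossing_graph \<sigma> S"
        using kl[OF iN] unfolding crossing_graph_def by blast
      ultimately show ?thesis by simp
    qed
    then have "?edge ` X \<subseteq> spanned (crossing_graph \<sigma> S) X"
      by (rule image_subsetI)
    moreover have "inj_on ?edge X"
      using \<open>inj_on ?edge ?N\<close> X(1) by (rule inj_on_subset)
    moreover have "finite (crossing_graph \<sigma> S)"
      using assms(2) by (rule finite_crossing_graph)
    ultimately show "card X \<le> card (spanned (crossing_graph \<sigma> S) X)"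
      by (simp add: card_inj_on_le)
  qed
qed

lemma exists_clash_free_apexes:
  assumes "finite S" "S \<subseteq> M" "hall_condition (crossing_graph \<sigma> S) {i\<in>S. blocked V \<sigma> S i}"
  shows "\<exists>w. \<forall>i\<in>S. w i \<in> V \<and> inside \<sigma> i (w i) \<and> (\<forall>j\<in>S. \<not> (w i = fst j \<and> w j = snd i))"
proof -
  let ?N = "{i\<in>S. blocked V \<sigma> S i}"
  obtain f where f: "\<forall>i\<in>?N. {i, f i} \<in> crossing_graph \<sigma> S \<and> (f i \<in> ?N \<longrightarrow> f (f i) \<noteq> i)"
    using hall_condition_imp_choice[OF _ finite_crossing_graph[OF assms(1)] _ assms(3)]
      assms(1) crossing_graph_card by auto
  have f_cross: "f i \<in> S" "crosses \<sigma> i (f i)" "f i \<in> ?N \<Longrightarrow> f (f i) \<noteq> i" if "i \<in> ?N" for i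
    using f crossing_graph_edgeD that by blast+
  have "\<forall>i\<in>S - ?N. \<exists>x. x \<in> V \<and> inside \<sigma> i x \<and> \<not> (\<exists>j\<in>S. crosses \<sigma> i j \<and> (x = fst j \<or> x = snd j))"
    unfolding blocked_def by blast
  from bchoice[OF this] obtain free where free: "\<forall>i\<in>S - ?N. free i \<in> V \<and> inside \<sigma> i (free i)
      \<and> \<not> (\<exists>j\<in>S. crosses \<sigma> i j \<and> (free i = fst j \<or> free i = snd j))" by blast
  define w where "w i = (if i \<in> ?N then (if inside \<sigma> i (fst (f i)) then fst (f i) else snd (f i))
      else free i)" for i
  have w_blocked: "w i = fst (f i) \<or> w i = snd (f i)" if "i \<in> ?N" for i
    using that unfolding w_def by simp
  have w_free: "\<not> (\<exists>j\<in>S. crosses \<sigma> i j \<and> (w i = fst j \<or> w i = snd j))" if "i \<in> S - ?N" for i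
    using free that unfolding w_def by auto
  have w_inside: "w i \<in> V \<and> inside \<sigma> i (w i)" if "i \<in> S" for i
  proof (cases "i \<in> ?N")
    case True
    have "f i \<in> M" using f_cross(1)[OF True] assms(2) by blast
    then have "fst (f i) \<in> V" "snd (f i) \<in> V"
      using backward_arc_ends[of "f i"] by auto
    then show ?thesis
      using f_cross(2)[OF True] True unfolding w_def crosses_def inside_def by auto
  qed (use free that w_def in auto)
  have no_clash: "\<not> (w i = fst j \<and> w j = snd i)" if ij: "i \<in> S" "j \<in> S" for i j
  proof
    assume clash: "w i = fst j \<and> w j = snd i"
    then have "crosses \<sigma> i j"
      using w_inside[OF ij(1)] w_inside[OF ij(2)] unfolding crosses_def inside_def by auto
    then have "i \<in> ?N" "j \<in> ?N"
      using w_free clash ij crosses_sym by blast+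
    have "f i = j"
      using w_blocked[OF \<open>i \<in> ?N\<close>] clash f_cross(1)[OF \<open>i \<in> ?N\<close>] ij(2) assms(2)
        backward_arcs_share_end by blast
    moreover have "f j = i"
      using w_blocked[OF \<open>j \<in> ?N\<close>] clash f_cross(1)[OF \<open>j \<in> ?N\<close>] ij(1) assms(2)
        backward_arcs_share_end by blast
    ultimately show False using f_cross(3)[OF \<open>i \<in> ?N\<close>] \<open>j \<in> ?N\<close> by simp
  qed
  show ?thesis using w_inside no_clash by blast
qed

lemma triangle_packing_of_apexes:
  assumes "S \<subseteq> M" "\<And>i. i \<in> S \<Longrightarrow> w i \<in> V \<and> inside \<sigma> i (w i)"
    and no_clash: "\<And>i j. i \<in> S \<Longrightarrow> j \<in> S \<Longrightarrow> \<not> (w i = fst j \<and> w j = snd i)"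
  shows "\<exists>Q. triangle_packing A Q \<and> card Q = card S"
proof -
  define tri where "tri i = cycle_arcs [snd i, w i, fst i]" for i
  have tri_eq: "tri i = {(snd i, w i), (w i, fst i), (fst i, snd i)}" for i
    unfolding tri_def by (rule cycle_arcs_triangle)
  have tri_cycle: "is_dcycle A [snd i, w i, fst i]" if "i \<in> S" for i
  proof (rule is_dcycle_triangle)
    have "i \<in> M" using that assms(1) by blast
    then have i: "i \<in> M" "fst i \<in> V" "snd i \<in> V" "w i \<in> V" "inside \<sigma> i (w i)"
      using that assms(2) backward_arc_ends[of i] by auto
    then show "distinct [snd i, w i, fst i]"
      unfolding inside_def by auto
    have "(w i, snd i) \<notin> M" "(fst i, w i) \<notin> M"
      using backward_arcs_share_end[OF _ i(1)] i(5) unfolding inside_def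
      by (metis fst_conv snd_conv insertI1 insertI2 less_irrefl)+
    then show "(snd i, w i) \<in> A" "(w i, fst i) \<in> A"
      using i forward_arcI unfolding inside_def by auto
    show "(fst i, snd i) \<in> A" using backward_arcD[OF i(1)] by simp
  qed
  have tri_disjoint: "tri i \<inter> tri j = {}" if "i \<in> S" "j \<in> S" "i \<noteq> j" for i j
  proof -
    have "fst i \<noteq> fst j" "snd i \<noteq> snd j" "fst i \<noteq> snd j" "snd i \<noteq> fst j"
      using backward_arcs_share_end[of i j] that assms(1) by auto
    then show ?thesis
      unfolding tri_eq using no_clash[of i j] no_clash[of j i] that by auto
  qed
  have "inj_on tri S"
  proof (rule inj_onI)
    fix i j assume "i \<in> S" "j \<in> S" "tri i = tri j"
    then show "i = j" using tri_disjoint unfolding tri_eq by blast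
  qed
  moreover have "triangle_packing A (tri ` S)"
    unfolding triangle_packing_def using tri_cycle tri_disjoint unfolding tri_def by fastforce
  ultimately show ?thesis using card_image by blast
qed

lemma cycle_packing_to_triangle_packing:
  assumes "cycle_packing A P"
  shows "\<exists>Q. triangle_packing A Q \<and> card Q = card P"
proof -
  obtain S cyc where S: "S \<subseteq> M" "card S = card P" "\<And>i. i \<in> S \<Longrightarrow> owns_cycle S i (cyc i)"
    and disjoint: "\<And>i j. i \<in> S \<Longrightarrow> j \<in> S \<Longrightarrow> i \<noteq> j \<Longrightarrow> cycle_arcs (cyc i) \<inter> cycle_arcs (cyc j) = {}"
    using widest_backward_arcs[OF assms] by blast
  have "finite S"
    using S(1) backward_arcs_subset finite_arcs by (meson finite_subset)
  then obtain w where "\<forall>i\<in>S. w i \<in> V \<and> inside \<sigma> i (w i) \<and> (\<forall>j\<in>S. \<not> (w i = fst j \<and> w j = snd i))"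
    using exists_clash_free_apexes[OF _ S(1) hall_condition_blocked[OF S(1) _ S(3) disjoint]] by blast
  then show ?thesis
    using triangle_packing_of_apexes[OF S(1), of w] S(2) by auto
qed

end

theorem mainTheorem9:
  fixes V :: "'a set" and A :: "('a \<times> 'a) set"
  assumes "tournament V A" and "fully_sparse V A"
  shows "max_cycle_packing A = max_triangle_packing A"
proof -
  obtain \<sigma> where "fully_sparse_wrt V A \<sigma>"
    using assms(2) unfolding fully_sparse_def by blast
  then interpret backward_matching V A \<sigma>
    using assms(1) by (rule fully_sparse_wrt_imp_backward_matching[rotated])
  show ?thesis
    using cycle_packing_to_triangle_packing by (rule max_cycle_packing_eq_max_triangle_packing)
qed

end
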